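(* Let $P$ be a finite set of points in $\mathbb{R}^2$ in general position and let $(t,u,v)$ be consecutive vertices of the first convex layer $L^1$ of $P$. If $u$ is deleted from $P$, then among the vertices of $L^1$ (other than $u$), only the sensitivities of $t$ and $v$ change.
   Context: $L^1$ is the set of vertices of the convex hull of $P$. The sensitivity of a point $p\in P$ is the amount by which the area of the convex hull of $P$ decreases when $p$ is removed from $P$. *)

theory Defs
  imports "HOL-Analysis.Analysis"
begin

definition general_position :: "(real^2) set \<Rightarrow> bool" where
  "general_position P \<longleftrightarrow>
     (\<forall>a\<in>P. \<forall>b\<in>P. \<forall>c\<in>P. a \<noteq> b \<and> a \<noteq> c \<and> b \<noteq> c \<longrightarrow> \<not> collinear {a, b, c})"

definition layer1 :: "(real^2) set \<Rightarrow> (real^2) set" where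
  "layer1 P = {p \<in> P. p extreme_point_of (convex hull P)}"

definition hull_area :: "(real^2) set \<Rightarrow> real" where
  "hull_area P = measure lebesgue (convex hull P)"

definition sensitivity :: "(real^2) set \<Rightarrow> real^2 \<Rightarrow> real" where
  "sensitivity P p = hull_area P - hull_area (P - {p})"

definition consecutive_vertices :: "(real^2) set \<Rightarrow> real^2 \<Rightarrow> real^2 \<Rightarrow> real^2 \<Rightarrow> bool" where
  "consecutive_vertices P t u v \<longleftrightarrow>
     t \<in> layer1 P \<and> u \<in> layer1 P \<and> v \<in> layer1 P \<and>
     t \<noteq> u \<and> u \<noteq> v \<and> t \<noteq> v \<and>
     closed_segment t u face_of convex hull P \<and>
     closed_segment u v face_of convex hull P"

end

theory Submission
  imports Defs
begin

text \<open>Let \<open>w\<close> be another hull vertex and \<open>Q = P - {u, w}\<close>. Since \<open>tu\<close> and \<open>uv\<close> are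
  edges and \<open>w\<close> lies outside the triangle \<open>tuv\<close>, the quadrilateral \<open>tuvw\<close> is convex, so its
  diagonal \<open>uw\<close> meets the segment \<open>tv \<subseteq> conv Q\<close>. Consequently the hulls
  \<open>A = conv (Q + u)\<close> and \<open>B = conv (Q + w)\<close> satisfy \<open>A \<union> B = conv P\<close> and
  \<open>A \<inter> B = conv Q\<close>, and inclusion-exclusion for areas gives
  \<open>|conv P| - |A| = |B| - |conv Q|\<close>: the sensitivity of \<open>w\<close> is the same in \<open>P\<close> and in \<open>P - {u}\<close>.\<close>

lemma affine_hull_3_eq_UNIV:
  fixes a b c :: "'a::euclidean_space"
  assumes "DIM('a) = 2" and "\<not> collinear {a, b, c}"
  shows "affine hull {a, b, c} = UNIV"
proof -
  have "a \<noteq> b" "a \<noteq> c" "b \<noteq> c" "\<not> affine_dependent {a, b, c}"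
    using assms(2) by (auto simp: collinear_3_eq_affine_dependent)
  then have "aff_dim {a, b, c} = DIM('a)"
    using aff_dim_affine_independent[of "{a, b, c}"] assms(1) by simp
  then show ?thesis
    by (simp add: aff_dim_eq_full)
qed

lemma extreme_point_notin_convex_hull_Diff:
  assumes "x extreme_point_of convex hull S"
  shows "x \<notin> convex hull (S - {x})"
proof -
  have "convex (convex hull S - {x})"
    using assms extreme_point_of_stillconvex[of "convex hull S"] by simp
  then have "convex hull (S - {x}) \<subseteq> convex hull S - {x}"
    by (intro hull_minimal) (auto simp: hull_inc)
  then show ?thesis
    by blast
qed

lemma convex_quadrilateral_diagonals_meet:
  fixes t u v w :: "'a::euclidean_space"
  assumes "DIM('a) = 2" and "\<not> collinear {t, u, v}"
    and "a \<bullet> t = b" "a \<bullet> u = b" "a \<bullet> v < b" "a \<bullet> w < b"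
    and "c \<bullet> u = d" "c \<bullet> v = d" "c \<bullet> t < d" "c \<bullet> w < d"
    and "w \<notin> convex hull {t, u, v}"
  obtains m where "m \<in> closed_segment t v" and "m \<in> closed_segment u w"
proof -
  txt \<open>In barycentric coordinates w.r.t. \<open>t, u, v\<close> the edge conditions make the weights of
    \<open>t\<close> and \<open>v\<close> positive, and \<open>w \<notin> conv {t, u, v}\<close> makes the weight of \<open>u\<close> negative.\<close>
  have "w \<in> affine hull {t, u, v}"
    using affine_hull_3_eq_UNIV[OF assms(1,2)] by simp
  then obtain \<alpha> \<beta> \<gamma> where sum: "\<alpha> + \<beta> + \<gamma> = 1"
    and w: "w = \<alpha> *\<^sub>R t + \<beta> *\<^sub>R u + \<gamma> *\<^sub>R v"
    unfolding affine_hull_3 by blast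
  then have \<beta>_eq: "\<beta> = 1 - \<alpha> - \<gamma>"
    by simp
  have "a \<bullet> w - b = \<gamma> * (a \<bullet> v - b)"
    using assms(3,4) unfolding w \<beta>_eq by (simp add: inner_add_right algebra_simps)
  then have "\<gamma> * (a \<bullet> v - b) < 0"
    using assms(6) by simp
  then have \<gamma>: "\<gamma> > 0"
    using assms(5) by (simp add: mult_less_0_iff)
  have "c \<bullet> w - d = \<alpha> * (c \<bullet> t - d)"
    using assms(7,8) unfolding w \<beta>_eq by (simp add: inner_add_right algebra_simps)
  then have "\<alpha> * (c \<bullet> t - d) < 0"
    using assms(10) by simp
  then have \<alpha>: "\<alpha> > 0"
    using assms(9) by (simp add: mult_less_0_iff)
  have \<beta>: "\<beta> < 0"
  proof (rule ccontr)
    assume "\<not> \<beta> < 0"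
    then have "w \<in> convex hull {t, u, v}"
      using \<alpha> \<gamma> sum w unfolding convex_hull_3 by fastforce
    with assms(11) show False ..
  qed
  define m where "m = (\<alpha> / (1 - \<beta>)) *\<^sub>R t + (\<gamma> / (1 - \<beta>)) *\<^sub>R v"
  have "m = (1 - \<gamma> / (1 - \<beta>)) *\<^sub>R t + (\<gamma> / (1 - \<beta>)) *\<^sub>R v"
    using sum \<beta> unfolding m_def by (simp add: field_simps)
  moreover have "0 \<le> \<gamma> / (1 - \<beta>)" "\<gamma> / (1 - \<beta>) \<le> 1"
    using \<alpha> \<beta> \<gamma> sum by auto
  ultimately have tv: "m \<in> closed_segment t v"
    unfolding in_segment by blast
  have "m = (1 - 1 / (1 - \<beta>)) *\<^sub>R u + (1 / (1 - \<beta>)) *\<^sub>R w"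
    using \<beta> unfolding m_def w by (simp add: field_simps scaleR_add_right scaleR_diff_left)
  moreover have "0 \<le> 1 / (1 - \<beta>)" "1 / (1 - \<beta>) \<le> 1"
    using \<beta> by auto
  ultimately have "m \<in> closed_segment u w"
    unfolding in_segment by blast
  with tv show ?thesis
    using that by blast
qed

lemma convex_hull_3_split:
  fixes z u w m :: "'a::euclidean_space"
  assumes "m \<in> closed_segment u w"
  shows "convex hull {z, u, w} = convex hull {z, u, m} \<union> convex hull {z, m, w}"
proof -
  have cone: "convex hull {z, a, b} = (\<Union>y \<in> closed_segment a b. closed_segment z y)" for a b :: 'a
    unfolding convex_hull_insert_segments[of z] by (simp add: segment_convex_hull)
  have "convex hull {z, u, w} = (\<Union>y \<in> closed_segment u m \<union> closed_segment m w. closed_segment z y)"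
    by (simp only: cone Un_closed_segment[OF assms])
  also have "\<dots> = convex hull {z, u, m} \<union> convex hull {z, m, w}"
    by (simp only: cone UN_Un)
  finally show ?thesis .
qed

lemma convex_hull_insert_insert_eq_Un:
  fixes Q :: "'a::euclidean_space set"
  assumes "m \<in> convex hull Q" and "m \<in> closed_segment u w"
  shows "convex hull (insert u (insert w Q)) = convex hull (insert u Q) \<union> convex hull (insert w Q)"
proof
  show "convex hull (insert u Q) \<union> convex hull (insert w Q) \<subseteq> convex hull (insert u (insert w Q))"
    by (intro Un_least hull_mono) auto
  show "convex hull (insert u (insert w Q)) \<subseteq> convex hull (insert u Q) \<union> convex hull (insert w Q)"
  proof
    fix x assume "x \<in> convex hull (insert u (insert w Q))"
    moreover have "Q \<noteq> {}"
      using assms(1) by auto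
    ultimately obtain y z where x: "x \<in> closed_segment u y" and y: "y \<in> closed_segment w z"
      and z: "z \<in> convex hull Q"
      by (auto simp: convex_hull_insert_segments)
    have "y \<in> convex hull {z, u, w}"
      using y closed_segment_subset_convex_hull[of w "{z, u, w}" z] by (auto simp: hull_inc)
    then have "x \<in> convex hull {z, u, w}"
      using x closed_segment_subset_convex_hull[of u "{z, u, w}" y] by (auto simp: hull_inc)
    then have "x \<in> convex hull {z, u, m} \<union> convex hull {z, m, w}"
      by (simp add: convex_hull_3_split[OF assms(2)])
    moreover have "convex hull {z, u, m} \<subseteq> convex hull (insert u Q)"
      using z assms(1) hull_mono[of Q "insert u Q"] by (intro convex_hull_subset) (auto simp: hull_inc)
    moreover have "convex hull {z, m, w} \<subseteq> convex hull (insert w Q)"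
      using z assms(1) hull_mono[of Q "insert w Q"] by (intro convex_hull_subset) (auto simp: hull_inc)
    ultimately show "x \<in> convex hull (insert u Q) \<union> convex hull (insert w Q)"
      by blast
  qed
qed

lemma convex_hull_insert_Int_insert:
  fixes Q :: "'a::euclidean_space set"
  assumes "finite Q" and "m \<in> convex hull Q" and "m \<in> closed_segment u w"
  shows "convex hull (insert u Q) \<inter> convex hull (insert w Q) = convex hull Q"
proof
  show "convex hull Q \<subseteq> convex hull (insert u Q) \<inter> convex hull (insert w Q)"
    by (simp add: hull_mono subset_insertI)
  show "convex hull (insert u Q) \<inter> convex hull (insert w Q) \<subseteq> convex hull Q"
  proof (rule subsetI, rule ccontr)
    txt \<open>A line separating \<open>x\<close> from \<open>conv Q\<close> would have \<open>u\<close> and \<open>w\<close>, hence \<open>m\<close>, on the side of \<open>x\<close>.\<close>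
    fix x assume x: "x \<in> convex hull (insert u Q) \<inter> convex hull (insert w Q)"
      and "x \<notin> convex hull Q"
    moreover have "closed (convex hull Q)"
      using assms(1) by (simp add: compact_imp_closed finite_imp_compact_convex_hull)
    ultimately obtain a b where ax: "a \<bullet> x < b" and aQ: "\<forall>y \<in> convex hull Q. b < a \<bullet> y"
      using separating_hyperplane_closed_point[OF convex_convex_hull] by blast
    have "a \<bullet> p < b" if "p \<in> {u, w}" for p
    proof (rule ccontr)
      assume "\<not> a \<bullet> p < b"
      then have "insert p Q \<subseteq> {y. b \<le> a \<bullet> y}"
        using aQ hull_subset[of Q convex] by fastforce
      then have "convex hull (insert p Q) \<subseteq> {y. b \<le> a \<bullet> y}"
        by (simp add: convex_halfspace_ge hull_minimal)
      with x that ax show False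
        by auto
    qed
    then have "closed_segment u w \<subseteq> {y. a \<bullet> y < b}"
      by (intro closed_segment_subset) (auto simp: convex_halfspace_lt)
    with assms(2,3) aQ show False
      by fastforce
  qed
qed

lemma sensitivity_insert_eq:
  assumes "finite Q" and "w \<notin> Q" and "u \<noteq> w"
    and "m \<in> convex hull Q" and "m \<in> closed_segment u w"
  shows "sensitivity (insert u (insert w Q)) w = sensitivity (insert w Q) w"
proof -
  let ?A = "convex hull (insert u Q)" and ?B = "convex hull (insert w Q)"
  have "?A \<in> lmeasurable" "?B \<in> lmeasurable"
    using assms(1) by (simp_all add: lmeasurable_compact finite_imp_compact_convex_hull)
  have "insert u (insert w Q) - {w} = insert u Q" "insert w Q - {w} = Q"
    using assms(2,3) by auto
  then have "sensitivity (insert u (insert w Q)) w = measure lebesgue (?A \<union> ?B) - measure lebesgue ?A"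
    by (simp add: sensitivity_def hull_area_def convex_hull_insert_insert_eq_Un[OF assms(4,5)])
  also have "\<dots> = measure lebesgue ?B - measure lebesgue (?A \<inter> ?B)"
    using measure_Un3[OF \<open>?A \<in> lmeasurable\<close> \<open>?B \<in> lmeasurable\<close>] by simp
  also have "\<dots> = sensitivity (insert w Q) w"
    using \<open>insert w Q - {w} = Q\<close>
    by (simp add: sensitivity_def hull_area_def convex_hull_insert_Int_insert[OF assms(1,4,5)])
  finally show ?thesis .
qed

lemma general_position_in_closed_segment:
  assumes "general_position P" and "t \<in> P" "u \<in> P" "p \<in> P"
    and "p \<in> closed_segment t u"
  shows "p = t \<or> p = u"
proof (cases "t = u")
  case True
  with assms(5) show ?thesis
    by simp
next
  case False
  have "collinear {t, u, p}"
    by (rule collinear_subset[OF collinear_closed_segment[of t u]]) (use assms(5) in auto)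
  moreover have "\<not> collinear {t, u, p}" if "p \<noteq> t" "p \<noteq> u"
    using assms(1-4) False that unfolding general_position_def by simp
  ultimately show ?thesis
    by blast
qed

lemma edge_strictly_supported:
  fixes P :: "(real^2) set"
  assumes "finite P" and "general_position P" and "t \<in> P" "u \<in> P"
    and "closed_segment t u face_of convex hull P"
  obtains a b where "a \<bullet> t = b" and "a \<bullet> u = b" and "\<forall>p \<in> P - {t, u}. a \<bullet> p < b"
proof -
  have "closed_segment t u exposed_face_of convex hull P"
    using assms(1,5) by (simp add: exposed_face_of_polyhedron polytope_imp_polyhedron polytope_convex_hull)
  then obtain a b where le: "convex hull P \<subseteq> {x. a \<bullet> x \<le> b}"
    and eq: "closed_segment t u = convex hull P \<inter> {x. a \<bullet> x = b}"
    unfolding exposed_face_of_def by blast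
  have "t \<in> closed_segment t u" "u \<in> closed_segment t u"
    by simp_all
  then have "a \<bullet> t = b" "a \<bullet> u = b"
    unfolding eq by simp_all
  moreover have "a \<bullet> p < b" if "p \<in> P - {t, u}" for p
  proof -
    have "p \<in> convex hull P"
      using that by (simp add: hull_inc)
    moreover have "p \<notin> closed_segment t u"
      using general_position_in_closed_segment[OF assms(2-4)] that by blast
    ultimately show ?thesis
      using le eq by fastforce
  qed
  ultimately show ?thesis
    using that by blast
qed

lemma consecutive_vertices_diagonals_meet:
  fixes P :: "(real^2) set"
  assumes "finite P" and "general_position P" and "consecutive_vertices P t u v"
    and "w \<in> layer1 P - {u, t, v}"
  obtains m where "m \<in> closed_segment t v" and "m \<in> closed_segment u w"
proof -
  have wP: "w \<in> P" "w \<noteq> u" "w \<noteq> t" "w \<noteq> v"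
    and extreme: "w extreme_point_of convex hull P"
    using assms(4) unfolding layer1_def by auto
  have tuv: "t \<in> P" "u \<in> P" "v \<in> P" "t \<noteq> u" "u \<noteq> v" "t \<noteq> v"
    and tu: "closed_segment t u face_of convex hull P" and uv: "closed_segment u v face_of convex hull P"
    using assms(3) unfolding consecutive_vertices_def layer1_def by auto
  obtain a b where ab: "a \<bullet> t = b" "a \<bullet> u = b" "\<forall>p \<in> P - {t, u}. a \<bullet> p < b"
    using edge_strictly_supported[OF assms(1,2) tuv(1,2) tu] .
  obtain c d where cd: "c \<bullet> u = d" "c \<bullet> v = d" "\<forall>p \<in> P - {u, v}. c \<bullet> p < d"
    using edge_strictly_supported[OF assms(1,2) tuv(2,3) uv] .
  have "v \<in> P - {t, u}" "w \<in> P - {t, u}" "t \<in> P - {u, v}" "w \<in> P - {u, v}"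
    using tuv wP by auto
  then have "a \<bullet> v < b" "a \<bullet> w < b" "c \<bullet> t < d" "c \<bullet> w < d"
    using ab(3) cd(3) by blast+
  moreover have "\<not> collinear {t, u, v}"
    using assms(2) tuv unfolding general_position_def by blast
  moreover have "w \<notin> convex hull {t, u, v}"
  proof -
    have "convex hull {t, u, v} \<subseteq> convex hull (P - {w})"
      using tuv wP by (intro hull_mono) auto
    then show ?thesis
      using extreme_point_notin_convex_hull_Diff[OF extreme] by blast
  qed
  ultimately show ?thesis
    using convex_quadrilateral_diagonals_meet[of t u v a b w c d] ab(1,2) cd(1,2) that by auto
qed

theorem lemma1:
  fixes P :: "(real^2) set" and t u v :: "real^2"
  assumes "finite P"
    and "general_position P"
    and "consecutive_vertices P t u v"
  shows "\<forall>w \<in> layer1 P - {u, t, v}. sensitivity (P - {u}) w = sensitivity P w"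
proof
  fix w assume w: "w \<in> layer1 P - {u, t, v}"
  then obtain m where m: "m \<in> closed_segment t v" "m \<in> closed_segment u w"
    using consecutive_vertices_diagonals_meet[OF assms] by blast
  have P: "t \<in> P" "u \<in> P" "v \<in> P" "w \<in> P" "u \<notin> {t, v}" "w \<notin> {t, u, v}"
    using assms(3) w unfolding consecutive_vertices_def layer1_def by auto
  define Q where "Q = P - {u, w}"
  have "m \<in> convex hull Q"
    using m(1) closed_segment_subset_convex_hull[of t Q v] P by (auto simp: Q_def hull_inc)
  moreover have "P = insert u (insert w Q)" "P - {u} = insert w Q"
    using P by (auto simp: Q_def)
  moreover have "finite Q" "w \<notin> Q" "u \<noteq> w"
    using assms(1) P by (auto simp: Q_def)
  ultimately show "sensitivity (P - {u}) w = sensitivity P w"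
    using sensitivity_insert_eq[of Q w u m] m(2) by metis
qed

end
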